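(* Let $(T,\eta,(-)^\#,\sqsubseteq,\Uparrow)$ be a while-monad on $\mathbf{Set}$, $(\Omega,\le)$ a complete lattice and $o:T\Omega\to\Omega$ a meet-preserving Eilenberg–Moore $T$-algebra such that $o(\bigsqcup_i c_i)=\bigwedge_i o(c_i)$ for every $\omega$-chain $(c_i)$ in $(T\Omega,\sqsubseteq_\Omega)$ and $o(\Uparrow_\Omega)=\top$. Then for every condition $b$ and program $P$, $\llbracket\mathtt{while}\ b\ \{P\}\rrbracket^c=\mu\Psi$, where $\mu\Psi$ is the least fixpoint, in the complete lattice of join-preserving maps $\mathcal P_\Omega(\mathbb M)\to\mathcal P_\Omega(\mathbb M)$ ordered pointwise, of $\Psi(f)=\lambda\phi.\ f(\llbracket P\rrbracket^c(\phi\wedge_{\mathbb M}\mathrm{grd}_b^{\mathrm{tt}}))\vee_{\mathbb M}(\phi\wedge_{\mathbb M}\mathrm{grd}_b^{\mathrm{ff}})$.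
   Context: Fix a set of values $\mathbb V$, a finite set of variables $X$, and memories $\mathbb M=\mathbb V^X$. Programs: $P::=\mathtt{skip}\mid P;P\mid x:=e\mid \mathtt{if}\ b\ \{P\}\ \mathtt{else}\ \{P\}\mid \mathtt{while}\ b\ \{P\}$. Each condition $b$ has a given interpretation $\llbracket b\rrbracket:\mathbb M\to\{\mathrm{ff},\mathrm{tt}\}$. A while-monad on $\mathbf{Set}$ is a monad $(T,\eta,(-)^\#)$ on $\mathbf{Set}$ together with an $\omega$-cpo structure $(\sqsubseteq_X,\Uparrow_X)$ (least element $\Uparrow_X$, sups $\bigsqcup$ of $\omega$-chains) on each $TX$, such that, with $\sqsubseteq_{X,Y}$ the pointwise order on Kleisli maps $\mathbf{Set}_T(X,Y)=\mathbf{Set}(X,TY)$ and $\Uparrow_{X,Y}=\lambda x.\Uparrow_Y$: Kleisli composition $g\bullet f=g^\#\circ f$ is monotone and $\omega$-continuous in each argument, and $f\bullet\Uparrow_{X,Y}=\Uparrow_{X,Z}$. Monadic semantics: each assignment has a given $\llbracket x:=e\rrbracket\in\mathbf{Set}_T(\mathbb M,\mathbb M)$, and $\llbracket\mathtt{skip}\rrbracket_T=\eta_{\mathbb M}$, $\llbracket P;P'\rrbracket_T=\llbracket P'\rrbracket_T\bullet\llbracket P\rrbracket_T$, $\llbracket x:=e\rrbracket_T=\llbracket x:=e\rrbracket$, $\llbracket\mathtt{if}\ b\ \{P_1\}\ \mathtt{else}\ \{P_2\}\rrbracket_T=\lambda\rho.$ if $\llbracket b\rrbracket\rho=\mathrm{tt}$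 then $\llbracket P_1\rrbracket_T(\rho)$ else $\llbracket P_2\rrbracket_T(\rho)$, $\llbracket\mathtt{while}\ b\ \{P\}\rrbracket_T=\mu\Phi$ (least fixpoint w.r.t. $\sqsubseteq_{\mathbb M,\mathbb M}$) with $\Phi(f)=\lambda\rho.$ if $\llbracket b\rrbracket\rho=\mathrm{tt}$ then $(f\bullet\llbracket P\rrbracket_T)(\rho)$ else $\eta_{\mathbb M}(\rho)$. $\mathcal P_\Omega(Y)=(\mathbf{Set}(Y,\Omega),\le_Y)$ with pointwise order and lattice operations $\wedge_Y,\vee_Y,\bot_Y,\top_Y$. An Eilenberg–Moore algebra $o$ is meet-preserving if each $\phi\mapsto o\circ T\phi:\mathcal P_\Omega(Y)\to\mathcal P_\Omega(TY)$ preserves arbitrary meets. For $f\in\mathbf{Set}_T(Y,Z)$, $wp^o(f)(\phi)=o\circ T\phi\circ f$ and $sp^o(f)$ is the left adjoint of $wp^o(f)$. The collecting semantics is $\llbracket P\rrbracket^c=sp^o(\llbracket P\rrbracket_T)$. $\mathrm{grd}_b^v(\rho)=\top$ if $\llbracket b\rrbracket\rho=v$, else $\bot$. *)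

theory Defs
  imports Main
begin

definition omega_chain :: "('a \<Rightarrow> 'a \<Rightarrow> bool) \<Rightarrow> (nat \<Rightarrow> 'a) \<Rightarrow> bool" where
  "omega_chain le c \<longleftrightarrow> (\<forall>i. le (c i) (c (Suc i)))"

definition is_lub :: "('a \<Rightarrow> 'a \<Rightarrow> bool) \<Rightarrow> (nat \<Rightarrow> 'a) \<Rightarrow> 'a \<Rightarrow> bool" where
  "is_lub le c x \<longleftrightarrow> (\<forall>i. le (c i) x) \<and> (\<forall>y. (\<forall>i. le (c i) y) \<longrightarrow> le x y)"

definition lub :: "('a \<Rightarrow> 'a \<Rightarrow> bool) \<Rightarrow> (nat \<Rightarrow> 'a) \<Rightarrow> 'a" where
  "lub le c = (THE x. is_lub le c x)"

definition omega_cpo :: "('a \<Rightarrow> 'a \<Rightarrow> bool) \<Rightarrow> 'a \<Rightarrow> bool" where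
  "omega_cpo le bt \<longleftrightarrow>
     (\<forall>x. le x x) \<and> (\<forall>x y z. le x y \<longrightarrow> le y z \<longrightarrow> le x z) \<and>
     (\<forall>x y. le x y \<longrightarrow> le y x \<longrightarrow> x = y) \<and>
     (\<forall>x. le bt x) \<and> (\<forall>c. omega_chain le c \<longrightarrow> (\<exists>x. is_lub le c x))"

definition kle :: "('a \<Rightarrow> 'a \<Rightarrow> bool) \<Rightarrow> ('x \<Rightarrow> 'a) \<Rightarrow> ('x \<Rightarrow> 'a) \<Rightarrow> bool" where
  "kle le f g \<longleftrightarrow> (\<forall>x. le (f x) (g x))"

definition lfp_wrt :: "('a \<Rightarrow> 'a \<Rightarrow> bool) \<Rightarrow> ('a \<Rightarrow> 'a) \<Rightarrow> 'a" where
  "lfp_wrt le F = (THE x. F x = x \<and> (\<forall>y. F y = y \<longrightarrow> le x y))"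

section \<open>While-monads on Set, restricted to the objects M (memories) and Omega\<close>

text \<open>Kleisli-triple presentation: units etaM, etaO and Kleisli extensions
  bXY :: (X => T Y) => T X => T Y for X, Y in {M, Omega}.  The types 'tm, 'to
  play the roles of T M and T Omega.\<close>

definition while_monad ::
  "('m \<Rightarrow> 'tm) \<Rightarrow> ('o \<Rightarrow> 'to) \<Rightarrow>
   (('m \<Rightarrow> 'tm) \<Rightarrow> 'tm \<Rightarrow> 'tm) \<Rightarrow> (('m \<Rightarrow> 'to) \<Rightarrow> 'tm \<Rightarrow> 'to) \<Rightarrow>
   (('o \<Rightarrow> 'tm) \<Rightarrow> 'to \<Rightarrow> 'tm) \<Rightarrow> (('o \<Rightarrow> 'to) \<Rightarrow> 'to \<Rightarrow> 'to) \<Rightarrow>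
   ('tm \<Rightarrow> 'tm \<Rightarrow> bool) \<Rightarrow> 'tm \<Rightarrow> ('to \<Rightarrow> 'to \<Rightarrow> bool) \<Rightarrow> 'to \<Rightarrow> bool" where
  "while_monad etaM etaO bMM bMO bOM bOO leM botM leO botO \<longleftrightarrow>
   \<comment> \<open>monad laws: left unit\<close>
   (\<forall>f x. bMM f (etaM x) = f x) \<and> (\<forall>f x. bMO f (etaM x) = f x) \<and>
   (\<forall>f x. bOM f (etaO x) = f x) \<and> (\<forall>f x. bOO f (etaO x) = f x) \<and>
   \<comment> \<open>right unit\<close>
   (\<forall>t. bMM etaM t = t) \<and> (\<forall>t. bOO etaO t = t) \<and>
   \<comment> \<open>associativity, all combinations of X, Y, Z\<close>
   (\<forall>f g t. bMM g (bMM f t) = bMM (\<lambda>x. bMM g (f x)) t) \<and>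
   (\<forall>f g t. bMO g (bMM f t) = bMO (\<lambda>x. bMO g (f x)) t) \<and>
   (\<forall>f g t. bOM g (bMO f t) = bMM (\<lambda>x. bOM g (f x)) t) \<and>
   (\<forall>f g t. bOO g (bMO f t) = bMO (\<lambda>x. bOO g (f x)) t) \<and>
   (\<forall>f g t. bMM g (bOM f t) = bOM (\<lambda>x. bMM g (f x)) t) \<and>
   (\<forall>f g t. bMO g (bOM f t) = bOO (\<lambda>x. bMO g (f x)) t) \<and>
   (\<forall>f g t. bOM g (bOO f t) = bOM (\<lambda>x. bOM g (f x)) t) \<and>
   (\<forall>f g t. bOO g (bOO f t) = bOO (\<lambda>x. bOO g (f x)) t) \<and>
   \<comment> \<open>omega-cpo structures on T M and T Omega\<close>
   omega_cpo leM botM \<and> omega_cpo leO botO \<and>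
   \<comment> \<open>Kleisli composition monotone in each argument\<close>
   (\<forall>(f :: 'm \<Rightarrow> 'tm) g g'. kle leM g g' \<longrightarrow> kle leM (bMM g \<circ> f) (bMM g' \<circ> f)) \<and>
   (\<forall>(f :: 'm \<Rightarrow> 'tm) g g'. kle leO g g' \<longrightarrow> kle leO (bMO g \<circ> f) (bMO g' \<circ> f)) \<and>
   (\<forall>(f :: 'm \<Rightarrow> 'to) g g'. kle leM g g' \<longrightarrow> kle leM (bOM g \<circ> f) (bOM g' \<circ> f)) \<and>
   (\<forall>(f :: 'm \<Rightarrow> 'to) g g'. kle leO g g' \<longrightarrow> kle leO (bOO g \<circ> f) (bOO g' \<circ> f)) \<and>
   (\<forall>(f :: 'm \<Rightarrow> 'tm) f' g. kle leM f f' \<longrightarrow> kle leM (bMM g \<circ> f) (bMM g \<circ> f')) \<and>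
   (\<forall>(f :: 'm \<Rightarrow> 'tm) f' g. kle leM f f' \<longrightarrow> kle leO (bMO g \<circ> f) (bMO g \<circ> f')) \<and>
   (\<forall>(f :: 'm \<Rightarrow> 'to) f' g. kle leO f f' \<longrightarrow> kle leM (bOM g \<circ> f) (bOM g \<circ> f')) \<and>
   (\<forall>(f :: 'm \<Rightarrow> 'to) f' g. kle leO f f' \<longrightarrow> kle leO (bOO g \<circ> f) (bOO g \<circ> f')) \<and>
   (\<forall>(f :: 'o \<Rightarrow> 'tm) f' g. kle leM f f' \<longrightarrow> kle leM (bMM g \<circ> f) (bMM g \<circ> f')) \<and>
   (\<forall>(f :: 'o \<Rightarrow> 'tm) f' g. kle leM f f' \<longrightarrow> kle leO (bMO g \<circ> f) (bMO g \<circ> f')) \<and>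
   (\<forall>(f :: 'o \<Rightarrow> 'to) f' g. kle leO f f' \<longrightarrow> kle leM (bOM g \<circ> f) (bOM g \<circ> f')) \<and>
   (\<forall>(f :: 'o \<Rightarrow> 'to) f' g. kle leO f f' \<longrightarrow> kle leO (bOO g \<circ> f) (bOO g \<circ> f')) \<and>
   (\<forall>(f :: 'o \<Rightarrow> 'tm) g g'. kle leM g g' \<longrightarrow> kle leM (bMM g \<circ> f) (bMM g' \<circ> f)) \<and>
   (\<forall>(f :: 'o \<Rightarrow> 'tm) g g'. kle leO g g' \<longrightarrow> kle leO (bMO g \<circ> f) (bMO g' \<circ> f)) \<and>
   (\<forall>(f :: 'o \<Rightarrow> 'to) g g'. kle leM g g' \<longrightarrow> kle leM (bOM g \<circ> f) (bOM g' \<circ> f)) \<and>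
   (\<forall>(f :: 'o \<Rightarrow> 'to) g g'. kle leO g g' \<longrightarrow> kle leO (bOO g \<circ> f) (bOO g' \<circ> f)) \<and>
   \<comment> \<open>omega-continuity in the first (inner) argument: g \<bullet> (\<Squnion>i f i) = \<Squnion>i (g \<bullet> f i);
       sups of Kleisli maps are pointwise\<close>
   (\<forall>(f :: nat \<Rightarrow> 'm \<Rightarrow> 'tm) g x. (\<forall>y. omega_chain leM (\<lambda>i. f i y)) \<longrightarrow>
       bMM g (lub leM (\<lambda>i. f i x)) = lub leM (\<lambda>i. bMM g (f i x))) \<and>
   (\<forall>(f :: nat \<Rightarrow> 'm \<Rightarrow> 'tm) g x. (\<forall>y. omega_chain leM (\<lambda>i. f i y)) \<longrightarrow>
       bMO g (lub leM (\<lambda>i. f i x)) = lub leO (\<lambda>i. bMO g (f i x))) \<and>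
   (\<forall>(f :: nat \<Rightarrow> 'm \<Rightarrow> 'to) g x. (\<forall>y. omega_chain leO (\<lambda>i. f i y)) \<longrightarrow>
       bOM g (lub leO (\<lambda>i. f i x)) = lub leM (\<lambda>i. bOM g (f i x))) \<and>
   (\<forall>(f :: nat \<Rightarrow> 'm \<Rightarrow> 'to) g x. (\<forall>y. omega_chain leO (\<lambda>i. f i y)) \<longrightarrow>
       bOO g (lub leO (\<lambda>i. f i x)) = lub leO (\<lambda>i. bOO g (f i x))) \<and>
   (\<forall>(f :: nat \<Rightarrow> 'o \<Rightarrow> 'tm) g x. (\<forall>y. omega_chain leM (\<lambda>i. f i y)) \<longrightarrow>
       bMM g (lub leM (\<lambda>i. f i x)) = lub leM (\<lambda>i. bMM g (f i x))) \<and>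
   (\<forall>(f :: nat \<Rightarrow> 'o \<Rightarrow> 'tm) g x. (\<forall>y. omega_chain leM (\<lambda>i. f i y)) \<longrightarrow>
       bMO g (lub leM (\<lambda>i. f i x)) = lub leO (\<lambda>i. bMO g (f i x))) \<and>
   (\<forall>(f :: nat \<Rightarrow> 'o \<Rightarrow> 'to) g x. (\<forall>y. omega_chain leO (\<lambda>i. f i y)) \<longrightarrow>
       bOM g (lub leO (\<lambda>i. f i x)) = lub leM (\<lambda>i. bOM g (f i x))) \<and>
   (\<forall>(f :: nat \<Rightarrow> 'o \<Rightarrow> 'to) g x. (\<forall>y. omega_chain leO (\<lambda>i. f i y)) \<longrightarrow>
       bOO g (lub leO (\<lambda>i. f i x)) = lub leO (\<lambda>i. bOO g (f i x))) \<and>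
   \<comment> \<open>omega-continuity in the second (outer) argument: (\<Squnion>i g i) \<bullet> f = \<Squnion>i (g i \<bullet> f)\<close>
   (\<forall>(g :: nat \<Rightarrow> 'm \<Rightarrow> 'tm) (f :: 'm \<Rightarrow> 'tm) x. (\<forall>y. omega_chain leM (\<lambda>i. g i y)) \<longrightarrow>
       bMM (\<lambda>y. lub leM (\<lambda>i. g i y)) (f x) = lub leM (\<lambda>i. bMM (g i) (f x))) \<and>
   (\<forall>(g :: nat \<Rightarrow> 'm \<Rightarrow> 'to) (f :: 'm \<Rightarrow> 'tm) x. (\<forall>y. omega_chain leO (\<lambda>i. g i y)) \<longrightarrow>
       bMO (\<lambda>y. lub leO (\<lambda>i. g i y)) (f x) = lub leO (\<lambda>i. bMO (g i) (f x))) \<and>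
   (\<forall>(g :: nat \<Rightarrow> 'o \<Rightarrow> 'tm) (f :: 'm \<Rightarrow> 'to) x. (\<forall>y. omega_chain leM (\<lambda>i. g i y)) \<longrightarrow>
       bOM (\<lambda>y. lub leM (\<lambda>i. g i y)) (f x) = lub leM (\<lambda>i. bOM (g i) (f x))) \<and>
   (\<forall>(g :: nat \<Rightarrow> 'o \<Rightarrow> 'to) (f :: 'm \<Rightarrow> 'to) x. (\<forall>y. omega_chain leO (\<lambda>i. g i y)) \<longrightarrow>
       bOO (\<lambda>y. lub leO (\<lambda>i. g i y)) (f x) = lub leO (\<lambda>i. bOO (g i) (f x))) \<and>
   (\<forall>(g :: nat \<Rightarrow> 'm \<Rightarrow> 'tm) (f :: 'o \<Rightarrow> 'tm) x. (\<forall>y. omega_chain leM (\<lambda>i. g i y)) \<longrightarrow>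
       bMM (\<lambda>y. lub leM (\<lambda>i. g i y)) (f x) = lub leM (\<lambda>i. bMM (g i) (f x))) \<and>
   (\<forall>(g :: nat \<Rightarrow> 'm \<Rightarrow> 'to) (f :: 'o \<Rightarrow> 'tm) x. (\<forall>y. omega_chain leO (\<lambda>i. g i y)) \<longrightarrow>
       bMO (\<lambda>y. lub leO (\<lambda>i. g i y)) (f x) = lub leO (\<lambda>i. bMO (g i) (f x))) \<and>
   (\<forall>(g :: nat \<Rightarrow> 'o \<Rightarrow> 'tm) (f :: 'o \<Rightarrow> 'to) x. (\<forall>y. omega_chain leM (\<lambda>i. g i y)) \<longrightarrow>
       bOM (\<lambda>y. lub leM (\<lambda>i. g i y)) (f x) = lub leM (\<lambda>i. bOM (g i) (f x))) \<and>
   (\<forall>(g :: nat \<Rightarrow> 'o \<Rightarrow> 'to) (f :: 'o \<Rightarrow> 'to) x. (\<forall>y. omega_chain leO (\<lambda>i. g i y)) \<longrightarrow>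
       bOO (\<lambda>y. lub leO (\<lambda>i. g i y)) (f x) = lub leO (\<lambda>i. bOO (g i) (f x))) \<and>
   \<comment> \<open>strictness: f \<bullet> \<Uparrow>_{X,Y} = \<Uparrow>_{X,Z}\<close>
   (\<forall>f. bMM f botM = botM) \<and> (\<forall>f. bMO f botM = botO) \<and>
   (\<forall>f. bOM f botO = botM) \<and> (\<forall>f. bOO f botO = botO)"

text \<open>EM-algebra laws in Kleisli form: o \<circ> \<eta> = id and o \<circ> f^# = o \<circ> T(o \<circ> f)
  (equivalent to o \<circ> \<mu> = o \<circ> T o).  T phi is (\<eta> \<circ> phi)^#.\<close>
definition em_algebra ::
  "('o \<Rightarrow> 'to) \<Rightarrow> (('m \<Rightarrow> 'to) \<Rightarrow> 'tm \<Rightarrow> 'to) \<Rightarrow> (('o \<Rightarrow> 'to) \<Rightarrow> 'to \<Rightarrow> 'to) \<Rightarrow> ('to \<Rightarrow> 'o) \<Rightarrow> bool" where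
  "em_algebra etaO bMO bOO alg \<longleftrightarrow>
     (\<forall>w. alg (etaO w) = w) \<and>
     (\<forall>f t. alg (bMO f t) = alg (bMO (etaO \<circ> alg \<circ> f) t)) \<and>
     (\<forall>f t. alg (bOO f t) = alg (bOO (etaO \<circ> alg \<circ> f) t))"

definition meet_preserving ::
  "('o::complete_lattice \<Rightarrow> 'to) \<Rightarrow> (('m \<Rightarrow> 'to) \<Rightarrow> 'tm \<Rightarrow> 'to) \<Rightarrow> (('o \<Rightarrow> 'to) \<Rightarrow> 'to \<Rightarrow> 'to) \<Rightarrow> ('to \<Rightarrow> 'o) \<Rightarrow> bool" where
  "meet_preserving etaO bMO bOO alg \<longleftrightarrow>
     (\<forall>S :: ('m \<Rightarrow> 'o) set. alg \<circ> bMO (etaO \<circ> Inf S) = Inf ((\<lambda>\<phi>. alg \<circ> bMO (etaO \<circ> \<phi>)) ` S)) \<and>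
     (\<forall>S :: ('o \<Rightarrow> 'o) set. alg \<circ> bOO (etaO \<circ> Inf S) = Inf ((\<lambda>\<phi>. alg \<circ> bOO (etaO \<circ> \<phi>)) ` S))"

definition wp :: "('o \<Rightarrow> 'to) \<Rightarrow> (('m \<Rightarrow> 'to) \<Rightarrow> 'tm \<Rightarrow> 'to) \<Rightarrow> ('to \<Rightarrow> 'o)
    \<Rightarrow> ('m \<Rightarrow> 'tm) \<Rightarrow> ('m \<Rightarrow> 'o) \<Rightarrow> ('m \<Rightarrow> 'o)" where
  "wp etaO bMO alg f \<phi> = alg \<circ> bMO (etaO \<circ> \<phi>) \<circ> f"

definition sp :: "('o::complete_lattice \<Rightarrow> 'to) \<Rightarrow> (('m \<Rightarrow> 'to) \<Rightarrow> 'tm \<Rightarrow> 'to) \<Rightarrow> ('to \<Rightarrow> 'o)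
    \<Rightarrow> ('m \<Rightarrow> 'tm) \<Rightarrow> ('m \<Rightarrow> 'o) \<Rightarrow> ('m \<Rightarrow> 'o)" where
  "sp etaO bMO alg f = (THE g. \<forall>\<psi> \<phi>. g \<psi> \<le> \<phi> \<longleftrightarrow> \<psi> \<le> wp etaO bMO alg f \<phi>)"

datatype ('x, 'e, 'b) prog =
    Skip
  | Seq "('x, 'e, 'b) prog" "('x, 'e, 'b) prog"
  | Assign 'x 'e
  | If 'b "('x, 'e, 'b) prog" "('x, 'e, 'b) prog"
  | While 'b "('x, 'e, 'b) prog"

text \<open>bsem: interpretation of conditions (True = tt); asem: given semantics of assignments.
  Kleisli composition g \<bullet> f = g^# \<circ> f.\<close>
primrec msem :: "('m \<Rightarrow> 'tm) \<Rightarrow> (('m \<Rightarrow> 'tm) \<Rightarrow> 'tm \<Rightarrow> 'tm) \<Rightarrow> ('tm \<Rightarrow> 'tm \<Rightarrow> bool)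
    \<Rightarrow> ('b \<Rightarrow> 'm \<Rightarrow> bool) \<Rightarrow> ('x \<Rightarrow> 'e \<Rightarrow> 'm \<Rightarrow> 'tm) \<Rightarrow> ('x, 'e, 'b) prog \<Rightarrow> 'm \<Rightarrow> 'tm" where
  "msem etaM bMM leM bsem asem Skip = etaM"
| "msem etaM bMM leM bsem asem (Seq P Q) =
     bMM (msem etaM bMM leM bsem asem Q) \<circ> msem etaM bMM leM bsem asem P"
| "msem etaM bMM leM bsem asem (Assign x e) = asem x e"
| "msem etaM bMM leM bsem asem (If b P Q) =
     (\<lambda>\<rho>. if bsem b \<rho> then msem etaM bMM leM bsem asem P \<rho> else msem etaM bMM leM bsem asem Q \<rho>)"
| "msem etaM bMM leM bsem asem (While b P) =
     lfp_wrt (kle leM)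
       (\<lambda>f \<rho>. if bsem b \<rho> then (bMM f \<circ> msem etaM bMM leM bsem asem P) \<rho> else etaM \<rho>)"

definition grd :: "('b \<Rightarrow> 'm \<Rightarrow> bool) \<Rightarrow> 'b \<Rightarrow> bool \<Rightarrow> 'm \<Rightarrow> 'o::complete_lattice" where
  "grd bsem b v \<rho> = (if bsem b \<rho> = v then top else bot)"

definition join_preserving :: "('a::complete_lattice \<Rightarrow> 'b::complete_lattice) \<Rightarrow> bool" where
  "join_preserving f \<longleftrightarrow> (\<forall>S. f (Sup S) = Sup (f ` S))"

definition jp_lfp :: "(('a::complete_lattice \<Rightarrow> 'a) \<Rightarrow> ('a \<Rightarrow> 'a)) \<Rightarrow> ('a \<Rightarrow> 'a)" where
  "jp_lfp F = (THE f. join_preserving f \<and> F f = f \<and>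
                  (\<forall>g. join_preserving g \<longrightarrow> F g = g \<longrightarrow> f \<le> g))"

end

theory Submission
  imports Defs
begin

text \<open>The collecting semantics is the left adjoint of the weakest precondition. For a loop, the
  weakest precondition is a fixpoint of \<open>\<Theta> h \<phi> = (if b then wp P (h \<phi>) else \<phi>)\<close>, and since
  Kleisli composition is continuous while the algebra turns suprema of chains into infima and
  sends \<open>\<Uparrow>\<close> to \<open>\<top>\<close>, it is the infimum of the iterates \<open>\<Theta>\<^sup>n \<top>\<close>, i.e. the greatest fixpoint of
  \<open>\<Theta>\<close>. Passing to left adjoints turns \<open>\<Theta>\<close> into \<open>\<Psi>\<close> and reverses the order, so the left
  adjoint of the greatest fixpoint of \<open>\<Theta>\<close> is the least join-preserving fixpoint of \<open>\<Psi>\<close>.\<close>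

section \<open>omega-cpos and Kleene's fixpoint theorem\<close>

lemma omega_cpo_refl: "omega_cpo le bt \<Longrightarrow> le x x"
  unfolding omega_cpo_def by blast

lemma omega_cpo_antisym: "omega_cpo le bt \<Longrightarrow> le x y \<Longrightarrow> le y x \<Longrightarrow> x = y"
  unfolding omega_cpo_def by blast

lemma omega_cpo_bot: "omega_cpo le bt \<Longrightarrow> le bt x"
  unfolding omega_cpo_def by blast

lemma lub_eqI:
  assumes "omega_cpo le bt" "is_lub le c x"
  shows "lub le c = x"
  unfolding lub_def
proof (rule the_equality)
  fix y assume "is_lub le c y"
  with assms show "y = x"
    unfolding is_lub_def by (blast intro: omega_cpo_antisym[OF assms(1)])
qed fact

lemma is_lub_lub:
  assumes "omega_cpo le bt" "omega_chain le c"
  shows "is_lub le c (lub le c)"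
proof -
  obtain x where "is_lub le c x"
    using assms unfolding omega_cpo_def by blast
  with lub_eqI[OF assms(1) this] show ?thesis by simp
qed

lemma lub_upper: "omega_cpo le bt \<Longrightarrow> omega_chain le c \<Longrightarrow> le (c i) (lub le c)"
  by (drule (1) is_lub_lub) (simp add: is_lub_def)

lemma lub_least:
  "omega_cpo le bt \<Longrightarrow> omega_chain le c \<Longrightarrow> (\<And>i. le (c i) y) \<Longrightarrow> le (lub le c) y"
  by (drule (1) is_lub_lub) (simp add: is_lub_def)

lemma lub_const: "omega_cpo le bt \<Longrightarrow> lub le (\<lambda>i. a) = a"
  by (rule lub_eqI) (auto simp: is_lub_def omega_cpo_refl)

lemma lub_Suc_shift:
  assumes cpo: "omega_cpo le bt" and ch: "omega_chain le c"
  shows "lub le (\<lambda>i. c (Suc i)) = lub le c"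
proof (rule lub_eqI[OF cpo])
  have "le (c i) y" if "\<forall>i. le (c (Suc i)) y" for i y
    using that ch cpo unfolding omega_chain_def omega_cpo_def by blast
  then show "is_lub le (\<lambda>i. c (Suc i)) (lub le c)"
    unfolding is_lub_def by (blast intro: lub_upper[OF cpo ch] lub_least[OF cpo ch])
qed

lemma kle_antisym: "omega_cpo le bt \<Longrightarrow> kle le f g \<Longrightarrow> kle le g f \<Longrightarrow> f = g"
  unfolding kle_def by (blast intro: omega_cpo_antisym)

lemma kle_iterates_chain:
  fixes F :: "('x \<Rightarrow> 'a) \<Rightarrow> ('x \<Rightarrow> 'a)"
  assumes cpo: "omega_cpo le bt"
    and mono: "\<And>f g. kle le f g \<Longrightarrow> kle le (F f) (F g)"
  shows "kle le ((F ^^ i) (\<lambda>_. bt)) ((F ^^ Suc i) (\<lambda>_. bt))"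
proof (induction i)
  case 0 show ?case by (simp add: kle_def omega_cpo_bot[OF cpo])
next
  case (Suc i) then show ?case by (simp add: mono)
qed

lemma lfp_wrt_kle_Kleene:
  assumes cpo: "omega_cpo le bt"
    and mono: "\<And>f g. kle le f g \<Longrightarrow> kle le (F f) (F g)"
    and cont: "\<And>c. (\<And>i. kle le (c i) (c (Suc i))) \<Longrightarrow>
                  F (\<lambda>x. lub le (\<lambda>i. c i x)) = (\<lambda>x. lub le (\<lambda>i. F (c i) x))"
  defines "L \<equiv> \<lambda>x. lub le (\<lambda>i. (F ^^ i) (\<lambda>_. bt) x)"
  shows "F L = L" and "lfp_wrt (kle le) F = L"
proof -
  define c where "c i = (F ^^ i) (\<lambda>_. bt)" for i
  have below_fixpoints: "kle le (c i) y" if "kle le (F y) y" for i y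
  proof (induction i)
    case 0 show ?case by (simp add: c_def kle_def omega_cpo_bot[OF cpo])
  next
    case (Suc i)
    then have "kle le (F (c i)) (F y)" by (rule mono)
    with that show ?case
      using cpo unfolding c_def kle_def omega_cpo_def by simp blast
  qed
  have chain: "kle le (c i) (c (Suc i))" for i
    unfolding c_def by (rule kle_iterates_chain[OF cpo mono])
  then have ptchain: "omega_chain le (\<lambda>i. c i x)" for x
    by (simp add: omega_chain_def kle_def)
  have L_c: "L = (\<lambda>x. lub le (\<lambda>i. c i x))" by (simp add: L_def c_def)
  show fixed: "F L = L"
    unfolding L_c cont[of c, OF chain]
    using lub_Suc_shift[OF cpo ptchain] by (simp add: c_def)
  have least: "kle le L y" if "F y = y" for y
    unfolding kle_def L_c
    using that below_fixpoints omega_cpo_refl[OF cpo]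
    by (auto intro!: lub_least[OF cpo ptchain] simp: kle_def)
  show "lfp_wrt (kle le) F = L"
    unfolding lfp_wrt_def
    by (rule the_equality) (use fixed least kle_antisym[OF cpo] in blast)+
qed

section \<open>Adjoint pairs of monotone maps between complete lattices\<close>

definition adjoint :: "('a::complete_lattice \<Rightarrow> 'b::complete_lattice) \<Rightarrow> ('b \<Rightarrow> 'a) \<Rightarrow> bool" where
  "adjoint l r \<longleftrightarrow> (\<forall>x y. l x \<le> y \<longleftrightarrow> x \<le> r y)"

lemma adjoint_left_unique: "adjoint l r \<Longrightarrow> adjoint l' r \<Longrightarrow> l = l'"
  unfolding adjoint_def by (metis antisym ext order_refl)

lemma adjoint_right_unique: "adjoint l r \<Longrightarrow> adjoint l r' \<Longrightarrow> r = r'"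
  unfolding adjoint_def by (metis antisym ext order_refl)

lemma adjoint_mono_right: "adjoint l r \<Longrightarrow> mono r"
  unfolding adjoint_def mono_def by (metis order_refl order_trans)

lemma adjoint_join_preserving:
  assumes "adjoint l r"
  shows "join_preserving l"
  unfolding join_preserving_def
proof
  fix S
  have "l (Sup S) \<le> y \<longleftrightarrow> Sup (l ` S) \<le> y" for y
    using assms by (simp add: adjoint_def Sup_le_iff)
  then show "l (Sup S) = Sup (l ` S)" by (meson antisym order_refl)
qed

lemma adjoint_of_Inf_preserving:
  assumes Inf_pres: "\<And>S. r (Inf S) = Inf (r ` S)"
  shows "adjoint (\<lambda>x. Inf {y. x \<le> r y}) r"
  unfolding adjoint_def
proof (intro allI iffI)
  have mono: "r a \<le> r b" if "a \<le> b" for a b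
  proof -
    have "r a = r (Inf {a, b})" using that by (simp add: inf_absorb1)
    also have "\<dots> = inf (r a) (r b)" using Inf_pres[of "{a, b}"] by simp
    finally show ?thesis by (metis inf.cobounded2)
  qed
  fix x y
  assume "Inf {y. x \<le> r y} \<le> y"
  moreover have "x \<le> r (Inf {y. x \<le> r y})" using Inf_pres by (simp add: le_INF_iff)
  ultimately show "x \<le> r y" using mono order_trans by blast
next
  fix x y assume "x \<le> r y"
  then show "Inf {y. x \<le> r y} \<le> y" by (simp add: Inf_lower)
qed

lemma adjoint_of_join_preserving:
  assumes "join_preserving l"
  shows "adjoint l (\<lambda>y. Sup {x. l x \<le> y})"
  unfolding adjoint_def
proof (intro allI iffI)
  fix x y assume "l x \<le> y"
  then show "x \<le> Sup {x. l x \<le> y}" by (simp add: Sup_upper)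
next
  have Sup_pres: "l (Sup S) = Sup (l ` S)" for S
    using assms unfolding join_preserving_def by blast
  have mono: "l a \<le> l b" if "a \<le> b" for a b
  proof -
    have "l b = l (Sup {a, b})" using that by (simp add: sup_absorb2)
    also have "\<dots> = sup (l a) (l b)" using Sup_pres[of "{a, b}"] by simp
    finally show ?thesis by (metis sup.cobounded1)
  qed
  fix x y assume "x \<le> Sup {x. l x \<le> y}"
  then have "l x \<le> l (Sup {x. l x \<le> y})" by (rule mono)
  also have "\<dots> \<le> y" unfolding Sup_pres by (auto intro: Sup_least)
  finally show "l x \<le> y" .
qed

section \<open>Predicate transformers of a loop\<close>

definition loop_wp :: "('m \<Rightarrow> bool) \<Rightarrow> (('m \<Rightarrow> 'o) \<Rightarrow> ('m \<Rightarrow> 'o)) \<Rightarrow>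
    (('m \<Rightarrow> 'o) \<Rightarrow> ('m \<Rightarrow> 'o)) \<Rightarrow> ('m \<Rightarrow> 'o) \<Rightarrow> ('m \<Rightarrow> 'o)" where
  "loop_wp B W h \<phi> \<rho> = (if B \<rho> then W (h \<phi>) \<rho> else \<phi> \<rho>)"

definition loop_sp :: "('b \<Rightarrow> 'm \<Rightarrow> bool) \<Rightarrow> 'b \<Rightarrow> (('m \<Rightarrow> 'o::complete_lattice) \<Rightarrow> ('m \<Rightarrow> 'o)) \<Rightarrow>
    (('m \<Rightarrow> 'o) \<Rightarrow> ('m \<Rightarrow> 'o)) \<Rightarrow> ('m \<Rightarrow> 'o) \<Rightarrow> ('m \<Rightarrow> 'o)" where
  "loop_sp bsem b S = (\<lambda>g \<phi>. sup (g (S (inf \<phi> (grd bsem b True)))) (inf \<phi> (grd bsem b False)))"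

lemma mono_loop_wp: "mono W \<Longrightarrow> mono (loop_wp B W)"
  unfolding loop_wp_def mono_def le_fun_def by simp

lemma adjoint_loop_sp_loop_wp:
  fixes S W g gR :: "('m \<Rightarrow> 'o::complete_lattice) \<Rightarrow> ('m \<Rightarrow> 'o)"
  assumes "adjoint S W" "adjoint g gR"
  shows "adjoint (loop_sp bsem b S g) (loop_wp (bsem b) W gR)"
  unfolding adjoint_def
proof (intro allI)
  fix \<phi> \<phi>' :: "'m \<Rightarrow> 'o"
  have "loop_sp bsem b S g \<phi> \<le> \<phi>'
      \<longleftrightarrow> inf \<phi> (grd bsem b True) \<le> W (gR \<phi>') \<and> inf \<phi> (grd bsem b False) \<le> \<phi>'"
    using assms unfolding adjoint_def loop_sp_def by simp
  also have "\<dots> \<longleftrightarrow> \<phi> \<le> loop_wp (bsem b) W gR \<phi>'"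
    unfolding le_fun_def grd_def inf_fun_def loop_wp_def by (auto split: if_splits)
  finally show "loop_sp bsem b S g \<phi> \<le> \<phi>' \<longleftrightarrow> \<phi> \<le> loop_wp (bsem b) W gR \<phi>'" .
qed

lemma fixpoint_le_iterates_top:
  fixes \<Theta> :: "'a::complete_lattice \<Rightarrow> 'a"
  assumes "mono \<Theta>" "\<Theta> g = g"
  shows "g \<le> (\<Theta> ^^ n) top"
proof (induction n)
  case (Suc n)
  then show ?case using assms by (metis funpow.simps(2) comp_apply monoD)
qed simp

lemma jp_lfp_eqI:
  assumes "join_preserving f" "F f = f" "\<And>g. join_preserving g \<Longrightarrow> F g = g \<Longrightarrow> f \<le> g"
  shows "jp_lfp F = f"
  unfolding jp_lfp_def
  by (rule the_equality) (use assms antisym in blast)+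

text \<open>The right adjoint of a join-preserving fixpoint of \<open>loop_sp\<close> is a fixpoint of \<open>loop_wp\<close>,
  hence lies below \<open>wL\<close>; taking left adjoints reverses this inequality.\<close>

lemma jp_lfp_loop_sp:
  assumes S: "adjoint S W"
    and L: "adjoint sL wL"
    and fixed: "loop_wp (bsem b) W wL = wL"
    and wL_iterates: "wL = (INF n. (loop_wp (bsem b) W ^^ n) top)"
  shows "jp_lfp (loop_sp bsem b S) = sL"
proof (rule jp_lfp_eqI)
  show "join_preserving sL" using L by (rule adjoint_join_preserving)
  have "adjoint (loop_sp bsem b S sL) wL"
    using adjoint_loop_sp_loop_wp[OF S L, of bsem b] fixed by simp
  then show "loop_sp bsem b S sL = sL" using L adjoint_left_unique by blast
next
  fix g assume g: "join_preserving g" "loop_sp bsem b S g = g"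
  define gR where "gR y = Sup {x. g x \<le> y}" for y
  have ag: "adjoint g gR"
    unfolding gR_def[abs_def] by (rule adjoint_of_join_preserving[OF g(1)])
  then have "adjoint g (loop_wp (bsem b) W gR)"
    using adjoint_loop_sp_loop_wp[OF S ag, of bsem b] g(2) by simp
  then have "loop_wp (bsem b) W gR = gR"
    using ag adjoint_right_unique by blast
  then have "gR \<le> wL"
    unfolding wL_iterates
    by (auto intro!: INF_greatest fixpoint_le_iterates_top mono_loop_wp adjoint_mono_right[OF S])
  then show "sL \<le> g"
    using ag L unfolding adjoint_def le_fun_def by (metis order_trans order_refl)
qed

section \<open>Weakest preconditions in a while-monad\<close>

lemma wp_Inf:
  assumes "meet_preserving etaO bMO bOO alg"
  shows "wp etaO bMO alg f (Inf S) = Inf (wp etaO bMO alg f ` S)"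
proof -
  have "alg \<circ> bMO (etaO \<circ> Inf S) = Inf ((\<lambda>\<phi>. alg \<circ> bMO (etaO \<circ> \<phi>)) ` S)"
    using assms unfolding meet_preserving_def by blast
  then show ?thesis
    by (intro ext) (simp add: wp_def image_comp comp_def fun_eq_iff)
qed

lemma adjoint_sp_wp:
  assumes "meet_preserving etaO bMO bOO alg"
  shows "adjoint (sp etaO bMO alg f) (wp etaO bMO alg f)"
proof -
  have a: "adjoint (\<lambda>x. Inf {y. x \<le> wp etaO bMO alg f y}) (wp etaO bMO alg f)"
    by (rule adjoint_of_Inf_preserving) (rule wp_Inf[OF assms])
  have "sp etaO bMO alg f = (THE g. adjoint g (wp etaO bMO alg f))"
    by (simp add: sp_def adjoint_def)
  also have "\<dots> = (\<lambda>x. Inf {y. x \<le> wp etaO bMO alg f y})"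
    using a adjoint_left_unique by blast
  finally show ?thesis using a by simp
qed

definition while_step :: "('m \<Rightarrow> 'tm) \<Rightarrow> (('m \<Rightarrow> 'tm) \<Rightarrow> 'tm \<Rightarrow> 'tm) \<Rightarrow>
    ('m \<Rightarrow> bool) \<Rightarrow> ('m \<Rightarrow> 'tm) \<Rightarrow> ('m \<Rightarrow> 'tm) \<Rightarrow> 'm \<Rightarrow> 'tm" where
  "while_step etaM bMM B K f \<rho> = (if B \<rho> then bMM f (K \<rho>) else etaM \<rho>)"

lemma msem_While:
  "msem etaM bMM leM bsem asem (While b P) =
     lfp_wrt (kle leM) (while_step etaM bMM (bsem b) (msem etaM bMM leM bsem asem P))"
  by (simp add: while_step_def[abs_def] cong: if_cong)

context
  fixes etaM :: "'m \<Rightarrow> 'tm" and etaO :: "'o::complete_lattice \<Rightarrow> 'to"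
    and bMM :: "('m \<Rightarrow> 'tm) \<Rightarrow> 'tm \<Rightarrow> 'tm" and bMO :: "('m \<Rightarrow> 'to) \<Rightarrow> 'tm \<Rightarrow> 'to"
    and bOM :: "('o \<Rightarrow> 'tm) \<Rightarrow> 'to \<Rightarrow> 'tm" and bOO :: "('o \<Rightarrow> 'to) \<Rightarrow> 'to \<Rightarrow> 'to"
    and leM :: "'tm \<Rightarrow> 'tm \<Rightarrow> bool" and botM :: 'tm
    and leO :: "'to \<Rightarrow> 'to \<Rightarrow> bool" and botO :: 'to
  assumes wm: "while_monad etaM etaO bMM bMO bOM bOO leM botM leO botO"
begin

lemma while_monad_unit_MO [rule_format]: "\<forall>f x. bMO f (etaM x) = f x"
  using wm unfolding while_monad_def by (elim conjE) assumption

lemma while_monad_assoc_MMO [rule_format]: "\<forall>f g t. bMO g (bMM f t) = bMO (\<lambda>x. bMO g (f x)) t"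
  using wm unfolding while_monad_def by (elim conjE) assumption

lemma while_monad_omega_cpo_M: "omega_cpo leM botM"
  using wm unfolding while_monad_def by (elim conjE) assumption

lemma while_monad_mono_MM_left [rule_format]:
  "\<forall>(f :: 'm \<Rightarrow> 'tm) g g'. kle leM g g' \<longrightarrow> kle leM (bMM g \<circ> f) (bMM g' \<circ> f)"
  using wm unfolding while_monad_def by (elim conjE) assumption

lemma while_monad_mono_MO_right [rule_format]:
  "\<forall>(f :: 'm \<Rightarrow> 'tm) f' g. kle leM f f' \<longrightarrow> kle leO (bMO g \<circ> f) (bMO g \<circ> f')"
  using wm unfolding while_monad_def by (elim conjE) assumption

lemma while_monad_cont_MO_right [rule_format]:
  "\<forall>(f :: nat \<Rightarrow> 'm \<Rightarrow> 'tm) g x. (\<forall>y. omega_chain leM (\<lambda>i. f i y)) \<longrightarrow>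
     bMO g (lub leM (\<lambda>i. f i x)) = lub leO (\<lambda>i. bMO g (f i x))"
  using wm unfolding while_monad_def by (elim conjE) assumption

lemma while_monad_cont_MM_left [rule_format]:
  "\<forall>(g :: nat \<Rightarrow> 'm \<Rightarrow> 'tm) (f :: 'm \<Rightarrow> 'tm) x. (\<forall>y. omega_chain leM (\<lambda>i. g i y)) \<longrightarrow>
     bMM (\<lambda>y. lub leM (\<lambda>i. g i y)) (f x) = lub leM (\<lambda>i. bMM (g i) (f x))"
  using wm unfolding while_monad_def by (elim conjE) assumption

lemma while_monad_strict_MO [rule_format]: "\<forall>f. bMO f botM = botO"
  using wm unfolding while_monad_def by (elim conjE) assumption

lemma mono_while_step:
  "kle leM f g \<Longrightarrow> kle leM (while_step etaM bMM B K f) (while_step etaM bMM B K g)"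
  using while_monad_mono_MM_left[of f g K] omega_cpo_refl[OF while_monad_omega_cpo_M]
  by (simp add: kle_def while_step_def)

lemma while_step_Kleene:
  fixes B :: "'m \<Rightarrow> bool" and K :: "'m \<Rightarrow> 'tm"
  defines "L \<equiv> \<lambda>\<rho>. lub leM (\<lambda>i. (while_step etaM bMM B K ^^ i) (\<lambda>_. botM) \<rho>)"
  shows "while_step etaM bMM B K L = L" and "lfp_wrt (kle leM) (while_step etaM bMM B K) = L"
proof -
  have cont: "while_step etaM bMM B K (\<lambda>x. lub leM (\<lambda>i. c i x))
      = (\<lambda>x. lub leM (\<lambda>i. while_step etaM bMM B K (c i) x))"
    if "\<And>i. kle leM (c i) (c (Suc i))" for c
    using that while_monad_cont_MM_left[of c] lub_const[OF while_monad_omega_cpo_M]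
    by (auto simp: while_step_def omega_chain_def kle_def)
  show "while_step etaM bMM B K L = L" "lfp_wrt (kle leM) (while_step etaM bMM B K) = L"
    unfolding L_def by (rule lfp_wrt_kle_Kleene[OF while_monad_omega_cpo_M mono_while_step cont]; assumption)+
qed

lemma wp_while_step:
  assumes "em_algebra etaO bMO bOO alg"
  shows "wp etaO bMO alg (while_step etaM bMM B K f)
    = loop_wp B (wp etaO bMO alg K) (wp etaO bMO alg f)"
proof -
  have "alg (etaO w) = w" "alg (bMO g t) = alg (bMO (etaO \<circ> alg \<circ> g) t)" for w g t
    using assms unfolding em_algebra_def by blast+
  then show ?thesis
    by (intro ext) (simp add: wp_def while_step_def loop_wp_def while_monad_assoc_MMO while_monad_unit_MO comp_def)
qed

lemma wp_lub:
  assumes cont: "\<And>c. omega_chain leO c \<Longrightarrow> alg (lub leO c) = (INF i. alg (c i))"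
    and chain: "\<And>i. kle leM (c i) (c (Suc i))"
  shows "wp etaO bMO alg (\<lambda>\<rho>. lub leM (\<lambda>i. c i \<rho>)) \<phi> \<rho> = (INF i. wp etaO bMO alg (c i) \<phi> \<rho>)"
proof -
  have "omega_chain leO (\<lambda>i. bMO (etaO \<circ> \<phi>) (c i \<rho>))"
    using while_monad_mono_MO_right[OF chain] by (simp add: omega_chain_def kle_def)
  moreover have "omega_chain leM (\<lambda>i. c i y)" for y
    using chain by (simp add: omega_chain_def kle_def)
  ultimately show ?thesis
    by (simp add: wp_def while_monad_cont_MO_right cont)
qed

lemma wp_while:
  fixes B :: "'m \<Rightarrow> bool" and K :: "'m \<Rightarrow> 'tm"
  assumes em: "em_algebra etaO bMO bOO alg"
    and cont: "\<And>c. omega_chain leO c \<Longrightarrow> alg (lub leO c) = (INF i. alg (c i))"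
    and strict: "alg botO = top"
  defines "W \<equiv> wp etaO bMO alg (lfp_wrt (kle leM) (while_step etaM bMM B K))"
  shows "loop_wp B (wp etaO bMO alg K) W = W"
    and "W = (INF n. (loop_wp B (wp etaO bMO alg K) ^^ n) top)"
proof -
  let ?\<Theta> = "loop_wp B (wp etaO bMO alg K)"
  let ?L = "lfp_wrt (kle leM) (while_step etaM bMM B K)"
  have "while_step etaM bMM B K ?L = ?L"
    unfolding while_step_Kleene(2) by (rule while_step_Kleene(1))
  then show "?\<Theta> W = W"
    using wp_while_step[OF em, of B K ?L] by (simp add: W_def)
  define c where "c i = (while_step etaM bMM B K ^^ i) (\<lambda>_. botM)" for i
  have chain: "kle leM (c i) (c (Suc i))" for i
    unfolding c_def by (rule kle_iterates_chain[OF while_monad_omega_cpo_M mono_while_step])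
  have wp_c: "wp etaO bMO alg (c n) = (?\<Theta> ^^ n) top" for n
  proof (induction n)
    case 0 show ?case by (simp add: c_def wp_def while_monad_strict_MO strict fun_eq_iff)
  next
    case (Suc n)
    have "c (Suc n) = while_step etaM bMM B K (c n)" by (simp add: c_def)
    with Suc show ?case by (simp add: wp_while_step[OF em])
  qed
  show "W = (INF n. (?\<Theta> ^^ n) top)"
  proof (intro ext)
    fix \<phi> \<rho>
    have "W \<phi> \<rho> = wp etaO bMO alg (\<lambda>\<rho>. lub leM (\<lambda>i. c i \<rho>)) \<phi> \<rho>"
      by (simp add: W_def while_step_Kleene(2) c_def)
    also have "\<dots> = (INF i. wp etaO bMO alg (c i) \<phi> \<rho>)"
      by (rule wp_lub[where alg = alg and c = c, OF cont chain])
    finally show "W \<phi> \<rho> = (INF n. (?\<Theta> ^^ n) top) \<phi> \<rho>"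
      by (simp add: wp_c image_comp)
  qed
qed

end

theorem mainTheorem4:
  fixes etaM :: "('x::finite \<Rightarrow> 'v) \<Rightarrow> 'tm" and etaO :: "'o::complete_lattice \<Rightarrow> 'to"
    and bMM :: "(('x \<Rightarrow> 'v) \<Rightarrow> 'tm) \<Rightarrow> 'tm \<Rightarrow> 'tm"
    and bMO :: "(('x \<Rightarrow> 'v) \<Rightarrow> 'to) \<Rightarrow> 'tm \<Rightarrow> 'to"
    and bOM :: "('o \<Rightarrow> 'tm) \<Rightarrow> 'to \<Rightarrow> 'tm"
    and bOO :: "('o \<Rightarrow> 'to) \<Rightarrow> 'to \<Rightarrow> 'to"
    and leM :: "'tm \<Rightarrow> 'tm \<Rightarrow> bool" and botM :: 'tm
    and leO :: "'to \<Rightarrow> 'to \<Rightarrow> bool" and botO :: 'to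
    and alg :: "'to \<Rightarrow> 'o"
    and bsem :: "'b \<Rightarrow> ('x \<Rightarrow> 'v) \<Rightarrow> bool"
    and asem :: "'x \<Rightarrow> 'e \<Rightarrow> ('x \<Rightarrow> 'v) \<Rightarrow> 'tm"
    and b :: 'b and P :: "('x, 'e, 'b) prog"
  assumes wm: "while_monad etaM etaO bMM bMO bOM bOO leM botM leO botO"
    and em: "em_algebra etaO bMO bOO alg"
    and mp: "meet_preserving etaO bMO bOO alg"
    and cont: "\<And>c. omega_chain leO c \<Longrightarrow> alg (lub leO c) = (INF i. alg (c i))"
    and strict: "alg botO = top"
  shows "sp etaO bMO alg (msem etaM bMM leM bsem asem (While b P)) =
         jp_lfp (\<lambda>f \<phi>. sup (f (sp etaO bMO alg (msem etaM bMM leM bsem asem P) (inf \<phi> (grd bsem b True))))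
                           (inf \<phi> (grd bsem b False)))"
proof -
  let ?K = "msem etaM bMM leM bsem asem P"
  let ?L = "lfp_wrt (kle leM) (while_step etaM bMM (bsem b) ?K)"
  have "jp_lfp (loop_sp bsem b (sp etaO bMO alg ?K)) = sp etaO bMO alg ?L"
  proof (rule jp_lfp_loop_sp)
    show "adjoint (sp etaO bMO alg ?K) (wp etaO bMO alg ?K)"
      "adjoint (sp etaO bMO alg ?L) (wp etaO bMO alg ?L)"
      using adjoint_sp_wp[OF mp] by blast+
    show "loop_wp (bsem b) (wp etaO bMO alg ?K) (wp etaO bMO alg ?L) = wp etaO bMO alg ?L"
      "wp etaO bMO alg ?L = (INF n. (loop_wp (bsem b) (wp etaO bMO alg ?K) ^^ n) top)"
      using wp_while[OF wm em cont strict] by blast+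
  qed
  then show ?thesis
    unfolding msem_While loop_sp_def by (rule sym)
qed

end
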